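(* Let $\{\lambda_i\}_{i\ge0}\subset\mathbb R$ and $w(x)=\sum_{i=0}^\infty\lambda_ix^i$ for $x\in\Delta_0=[-1,1]$. The series $w$ converges uniformly on $\Delta_0$ to a function $\widetilde\sigma(x)=\int_{\Delta_1}\frac{d\sigma(t)}{1-tx}$ for some measure $\sigma\in\mathcal M_0(\Delta_1)$ if and only if the restricted Hausdorff moment problem for the sequence $\{\lambda_i\}_{i\in\mathbb Z_+}$ has a solution.
   Context: $\Delta_0=[-1,1]$, $\Delta_1=[0,1]$, $\mathbb Z_+=\{0,1,2,\dots\}$. $\mathcal M(\Delta_1)$ is the set of finite Borel measures on $\Delta_1$ whose support has infinitely many points and which do not change sign. $\mathcal M_0(\Delta_1)$ is the set of $\sigma\in\mathcal M(\Delta_1)$ such that $\lim_{x\to1,\,x\in(0,1)}\left|\int_{\Delta_1}\frac{d\sigma(t)}{1-tx}\right|<+\infty$. The restricted Hausdorff moment problem for a real sequence $\{c_i\}$ asks for $\sigma\in\mathcal M_0(\Delta_1)$ with $c_i=\int t^i\,d\sigma(t)$ for all $i$. *)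

theory Defs
  imports "HOL-Analysis.Analysis"
begin

text \<open>A sign-definite finite Borel measure sigma on Delta_1 = [0,1] is represented by a
pair (c, mu): a (positive) finite Borel measure mu on the reals, concentrated on [0,1],
and a sign c in {1, -1}; then sigma = c * mu.\<close>

definition meas_support :: "real measure \<Rightarrow> real set" where
  "meas_support \<mu> = {x. \<forall>e>0. emeasure \<mu> (ball x e) > 0}"

definition in_M :: "real \<Rightarrow> real measure \<Rightarrow> bool" where
  "in_M c \<mu> \<longleftrightarrow> c \<in> {1, -1} \<and> sets \<mu> = sets borel \<and> finite_measure \<mu>
     \<and> emeasure \<mu> (- {0..1}) = 0 \<and> infinite (meas_support \<mu>)"

definition markov_fun :: "real \<Rightarrow> real measure \<Rightarrow> real \<Rightarrow> real" where
  "markov_fun c \<mu> x = c * (\<integral>t. 1 / (1 - t * x) \<partial>\<mu>)"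

definition in_M0 :: "real \<Rightarrow> real measure \<Rightarrow> bool" where
  "in_M0 c \<mu> \<longleftrightarrow> in_M c \<mu> \<and>
     (\<exists>L::real. ((\<lambda>x. \<bar>markov_fun c \<mu> x\<bar>) \<longlongrightarrow> L) (at_left 1))"

definition restricted_hausdorff_solvable :: "(nat \<Rightarrow> real) \<Rightarrow> bool" where
  "restricted_hausdorff_solvable m \<longleftrightarrow>
     (\<exists>c \<mu>. in_M0 c \<mu> \<and> (\<forall>i. m i = c * (\<integral>t. t ^ i \<partial>\<mu>)))"

end

theory Submission
  imports Defs "HOL-Complex_Analysis.Cauchy_Integral_Formula"
begin

text \<open>Expanding 1 / (1 - t x) as a geometric series and integrating termwise shows that
  sigma-tilde(x) is the power series with coefficients c m_i on (-1, 1), where m_i are the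
  moments of mu. If w converges to sigma-tilde, uniqueness of power series coefficients gives
  lambda_i = c m_i. Conversely, if lambda_i = c m_i, the moments are nonnegative and their
  partial sums are bounded by the limit of |sigma-tilde| at 1, so the m_i are summable; the
  Weierstrass M-test then gives uniform convergence on [-1, 1]. Summability also forces
  mu{1} = 0 and 1 / (1 - t) to be mu-integrable, so dominated convergence identifies the
  limit with sigma-tilde at the endpoints as well.\<close>

lemma abs_sum_geometric_le:
  fixes z r :: real
  assumes "\<bar>z\<bar> \<le> r" "r < 1"
  shows "\<bar>\<Sum>i<n. z ^ i\<bar> \<le> 1 / (1 - r)"
proof -
  have "\<bar>\<Sum>i<n. z ^ i\<bar> \<le> (\<Sum>i<n. \<bar>z\<bar> ^ i)"
    by (metis (no_types, lifting) power_abs sum.cong sum_abs)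
  also have "\<dots> = (1 - \<bar>z\<bar> ^ n) / (1 - \<bar>z\<bar>)"
    using assms by (subst sum_gp_strict) auto
  also have "\<dots> \<le> 1 / (1 - \<bar>z\<bar>)"
    using assms by (intro divide_right_mono) auto
  also have "\<dots> \<le> 1 / (1 - r)"
    using assms by (intro divide_left_mono) auto
  finally show ?thesis .
qed

lemma powser_coeffs_unique:
  fixes a b :: "nat \<Rightarrow> real"
  assumes "0 < r"
    and a: "\<And>x. \<bar>x\<bar> < r \<Longrightarrow> (\<lambda>i. a i * x ^ i) sums f x"
    and b: "\<And>x. \<bar>x\<bar> < r \<Longrightarrow> (\<lambda>i. b i * x ^ i) sums f x"
  shows "a = b"
proof
  fix i
  have diff: "(\<lambda>n. (a n - b n) * (x - 0) ^ n) sums 0" if "norm (x - 0) < r" for x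
  proof -
    have "\<bar>x\<bar> < r" using that by simp
    from sums_diff[OF a[OF this] b[OF this]] show ?thesis by (simp add: left_diff_distrib)
  qed
  show "a i = b i"
  proof (rule ccontr)
    assume ne: "a i \<noteq> b i"
    have "a 0 - b 0 = 0"
      using diff[of 0] \<open>0 < r\<close> by (simp add: sums_iff)
    with ne have "i > 0" by (cases i) auto
    show False
    proof (rule powser_0_nonzero[where f="\<lambda>_. 0", OF \<open>0 < r\<close> diff _ _ \<open>i > 0\<close>])
      fix s :: real
      assume "0 < s" and nz: "\<And>z::real. z \<in> cball 0 s - {0} \<Longrightarrow> (0::real) \<noteq> 0"
      have "s \<in> cball 0 s - {0}" using \<open>0 < s\<close> by simp
      from nz[OF this] show False by simp
    qed (use ne in auto)
  qed
qed

lemma summable_if_nonneg_powser_tendsto_at_left_1: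
  fixes a :: "nat \<Rightarrow> real"
  assumes nonneg: "\<And>i. 0 \<le> a i"
    and sums: "\<And>x. x \<in> {0<..<1} \<Longrightarrow> (\<lambda>i. a i * x ^ i) sums f x"
    and lim: "(f \<longlongrightarrow> L) (at_left 1)"
  shows "summable a"
proof (rule summableI_nonneg_bounded[OF nonneg])
  fix N
  show "(\<Sum>i<N. a i) \<le> L"
  proof (rule tendsto_le[OF trivial_limit_at_left_real lim])
    have "((\<lambda>x. \<Sum>i<N. a i * x ^ i) \<longlongrightarrow> (\<Sum>i<N. a i * 1 ^ i)) (at_left 1)"
      by (intro tendsto_intros)
    then show "((\<lambda>x. \<Sum>i<N. a i * x ^ i) \<longlongrightarrow> (\<Sum>i<N. a i)) (at_left 1)"
      by simp
    show "\<forall>\<^sub>F x in at_left 1. (\<Sum>i<N. a i * x ^ i) \<le> f x"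
      using eventually_at_left_real[OF zero_less_one]
    proof eventually_elim
      case (elim x)
      from sums[OF elim] have "summable (\<lambda>i. a i * x ^ i)" "f x = (\<Sum>i. a i * x ^ i)"
        by (auto simp: sums_iff)
      then show ?case
        using nonneg elim by (auto intro!: sum_le_suminf)
    qed
  qed
qed

definition moment :: "real measure \<Rightarrow> nat \<Rightarrow> real" where
  "moment \<mu> i = (\<integral>t. t ^ i \<partial>\<mu>)"

locale unit_interval_measure = finite_measure \<mu> for \<mu> :: "real measure" +
  assumes sets_eq_borel: "sets \<mu> = sets borel"
    and AE_unit_interval: "AE t in \<mu>. t \<in> {0..1}"
begin

lemma borel_measurable_real:
  "f \<in> borel_measurable borel \<Longrightarrow> f \<in> borel_measurable \<mu>"
  using measurable_cong_sets[OF sets_eq_borel refl] by blast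

lemma integrable_power: "integrable \<mu> (\<lambda>t. t ^ i)"
proof (rule integrable_const_bound[where B=1])
  show "AE t in \<mu>. norm (t ^ i) \<le> 1"
    using AE_unit_interval by eventually_elim (auto intro: power_le_one)
  show "(\<lambda>t. t ^ i) \<in> borel_measurable \<mu>"
    by (rule borel_measurable_real) measurable
qed

lemma moment_nonneg: "0 \<le> moment \<mu> i"
  unfolding moment_def using AE_unit_interval
  by (intro integral_nonneg_AE) (auto elim!: eventually_mono)

lemma integral_sum_geometric:
  "(\<integral>t. (\<Sum>i<n. (t * x) ^ i) \<partial>\<mu>) = (\<Sum>i<n. moment \<mu> i * x ^ i)"
  using integrable_power by (simp add: power_mult_distrib integral_sum moment_def)

lemma moments_powser_sums_dominated:
  assumes g: "integrable \<mu> g"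
    and bound: "AE t in \<mu>. \<forall>n. \<bar>\<Sum>i<n. (t * x) ^ i\<bar> \<le> g t"
    and lt1: "AE t in \<mu>. \<bar>t * x\<bar> < 1"
  shows "(\<lambda>i. moment \<mu> i * x ^ i) sums (\<integral>t. 1 / (1 - t * x) \<partial>\<mu>)"
  unfolding sums_def integral_sum_geometric[symmetric]
proof (rule integral_dominated_convergence[OF _ _ g])
  show "(\<lambda>t. 1 / (1 - t * x)) \<in> borel_measurable \<mu>"
    by (rule borel_measurable_real) measurable
  show "(\<lambda>t. \<Sum>i<n. (t * x) ^ i) \<in> borel_measurable \<mu>" for n
    by (rule borel_measurable_real) measurable
  show "AE t in \<mu>. (\<lambda>n. \<Sum>i<n. (t * x) ^ i) \<longlonglongrightarrow> 1 / (1 - t * x)"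
    using lt1 by eventually_elim (auto intro: geometric_sums[unfolded sums_def])
  show "AE t in \<mu>. norm (\<Sum>i<n. (t * x) ^ i) \<le> g t" for n
    using bound by eventually_elim auto
qed

lemma moments_powser_sums:
  assumes "\<bar>x\<bar> < 1"
  shows "(\<lambda>i. moment \<mu> i * x ^ i) sums (\<integral>t. 1 / (1 - t * x) \<partial>\<mu>)"
proof (rule moments_powser_sums_dominated[where g="\<lambda>_. 1 / (1 - \<bar>x\<bar>)"])
  have tx: "AE t in \<mu>. \<bar>t * x\<bar> \<le> \<bar>x\<bar>"
    using AE_unit_interval by eventually_elim (auto simp: abs_mult intro: mult_left_le_one_le)
  show "AE t in \<mu>. \<forall>n. \<bar>\<Sum>i<n. (t * x) ^ i\<bar> \<le> 1 / (1 - \<bar>x\<bar>)"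
    using tx by eventually_elim (use assms in \<open>auto intro: abs_sum_geometric_le\<close>)
  show "AE t in \<mu>. \<bar>t * x\<bar> < 1"
    using tx by eventually_elim (use assms in auto)
qed simp

lemma integral_markov_kernel_nonneg:
  assumes "x \<in> {0<..<1}"
  shows "0 \<le> (\<integral>t. 1 / (1 - t * x) \<partial>\<mu>)"
proof -
  have sums: "(\<lambda>i. moment \<mu> i * x ^ i) sums (\<integral>t. 1 / (1 - t * x) \<partial>\<mu>)"
    using assms by (intro moments_powser_sums) auto
  have "0 \<le> (\<Sum>i. moment \<mu> i * x ^ i)"
    using sums assms moment_nonneg by (intro suminf_nonneg) (auto simp: sums_iff)
  then show ?thesis
    using sums_unique[OF sums] by simp
qed

text \<open>The point 1 carries no mass, since its mass is bounded by every moment.\<close>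
lemma AE_less_1_if_summable_moments:
  assumes summ: "summable (moment \<mu>)"
  shows "AE t in \<mu>. t < 1"
proof -
  have "measure \<mu> {1} \<le> moment \<mu> i" for i
  proof -
    have "measure \<mu> {1} = (\<integral>t. indicator {1} t \<partial>\<mu>)"
      using sets_eq_borel by simp
    also have "\<dots> \<le> moment \<mu> i"
      unfolding moment_def using AE_unit_interval integrable_power
    proof (intro integral_mono_AE)
      show "integrable \<mu> (indicator {1} :: real \<Rightarrow> real)"
        using sets_eq_borel emeasure_real by (simp add: less_top[symmetric])
    qed (auto simp: indicator_def elim!: eventually_mono)
    finally show ?thesis .
  qed
  then have "measure \<mu> {1} \<le> 0"
    by (intro LIMSEQ_le_const[OF summable_LIMSEQ_zero[OF summ]]) blast
  then have "emeasure \<mu> {1} = 0"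
    by (simp add: emeasure_eq_measure measure_le_0_iff)
  then have "AE t in \<mu>. t \<noteq> 1"
    using sets_eq_borel by (intro AE_I[where N="{1}"]) auto
  then show ?thesis
    using AE_unit_interval by eventually_elim auto
qed

lemma integrable_inverse_1_minus_if_summable_moments:
  assumes summ: "summable (moment \<mu>)"
  shows "integrable \<mu> (\<lambda>t. 1 / (1 - t))"
proof (rule integrable_monotone_convergence[where f="\<lambda>n t. \<Sum>i<n. t ^ i" and x="suminf (moment \<mu>)"])
  have AE: "AE t in \<mu>. 0 \<le> t \<and> t < 1"
    using AE_unit_interval AE_less_1_if_summable_moments[OF summ] by eventually_elim auto
  show "integrable \<mu> (\<lambda>t. \<Sum>i<n. t ^ i)" for n
    using integrable_power by simp
  show "AE t in \<mu>. mono (\<lambda>n. \<Sum>i<n. t ^ i)"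
    using AE by eventually_elim (auto intro!: incseq_SucI)
  show "AE t in \<mu>. (\<lambda>n. \<Sum>i<n. t ^ i) \<longlonglongrightarrow> 1 / (1 - t)"
    using AE by eventually_elim (auto intro: geometric_sums[unfolded sums_def])
  show "(\<lambda>n. \<integral>t. (\<Sum>i<n. t ^ i) \<partial>\<mu>) \<longlonglongrightarrow> suminf (moment \<mu>)"
  proof -
    have "(\<integral>t. (\<Sum>i<n. t ^ i) \<partial>\<mu>) = (\<Sum>i<n. moment \<mu> i)" for n
      using integral_sum_geometric[where n=n and x=1] by (simp only: mult_1_right power_one)
    then show ?thesis
      using summable_LIMSEQ[OF summ] by simp
  qed
  show "(\<lambda>t. 1 / (1 - t)) \<in> borel_measurable \<mu>"
    by (rule borel_measurable_real) measurable
qed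

lemma moments_powser_sums_closed:
  assumes summ: "summable (moment \<mu>)" and x: "x \<in> {-1..1}"
  shows "(\<lambda>i. moment \<mu> i * x ^ i) sums (\<integral>t. 1 / (1 - t * x) \<partial>\<mu>)"
proof (rule moments_powser_sums_dominated[where g="\<lambda>t. 1 / (1 - t)"])
  show "integrable \<mu> (\<lambda>t. 1 / (1 - t))"
    by (rule integrable_inverse_1_minus_if_summable_moments[OF summ])
  have AE: "AE t in \<mu>. 0 \<le> t \<and> t < 1 \<and> \<bar>t * x\<bar> \<le> t"
    using AE_unit_interval AE_less_1_if_summable_moments[OF summ]
    by eventually_elim (use x in \<open>auto simp: abs_mult intro: mult_left_le\<close>)
  show "AE t in \<mu>. \<forall>n. \<bar>\<Sum>i<n. (t * x) ^ i\<bar> \<le> 1 / (1 - t)"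
    using AE by eventually_elim (auto intro: abs_sum_geometric_le)
  show "AE t in \<mu>. \<bar>t * x\<bar> < 1"
    using AE by eventually_elim auto
qed

end

lemma in_M_imp_unit_interval_measure:
  assumes "in_M c \<mu>"
  shows "unit_interval_measure \<mu>"
proof -
  have "AE t in \<mu>. t \<in> {0..1}"
    using assms by (intro AE_I[where N="-{0..1}"]) (auto simp: in_M_def)
  then show ?thesis
    using assms by (auto simp: in_M_def unit_interval_measure_def unit_interval_measure_axioms_def)
qed

lemma moments_eq_if_uniform_limit_markov:
  fixes lam :: "nat \<Rightarrow> real"
  assumes M: "in_M c \<mu>"
    and ul: "uniform_limit {-1..1} (\<lambda>n x. \<Sum>i<n. lam i * x ^ i) (markov_fun c \<mu>) sequentially"
  shows "lam i = c * moment \<mu> i"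
proof -
  interpret unit_interval_measure \<mu>
    by (rule in_M_imp_unit_interval_measure[OF M])
  have "lam = (\<lambda>i. c * moment \<mu> i)"
  proof (rule powser_coeffs_unique[OF zero_less_one])
    show "(\<lambda>i. lam i * x ^ i) sums markov_fun c \<mu> x" if "\<bar>x\<bar> < 1" for x
      using tendsto_uniform_limitI[OF ul, of x] that by (simp add: sums_def abs_less_iff)
    show "(\<lambda>i. c * moment \<mu> i * x ^ i) sums markov_fun c \<mu> x" if "\<bar>x\<bar> < 1" for x
      using sums_mult[OF moments_powser_sums[OF that], of c]
      by (simp add: markov_fun_def mult.assoc)
  qed
  then show ?thesis by simp
qed

lemma uniform_limit_markov_if_moments:
  fixes lam :: "nat \<Rightarrow> real"
  assumes M0: "in_M0 c \<mu>" and lam: "\<And>i. lam i = c * moment \<mu> i"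
  shows "uniform_limit {-1..1} (\<lambda>n x. \<Sum>i<n. lam i * x ^ i) (markov_fun c \<mu>) sequentially"
proof -
  interpret unit_interval_measure \<mu>
    using M0 by (intro in_M_imp_unit_interval_measure) (auto simp: in_M0_def)
  have c: "\<bar>c\<bar> = 1"
    using M0 by (auto simp: in_M0_def in_M_def)
  obtain L where L: "((\<lambda>x. \<bar>markov_fun c \<mu> x\<bar>) \<longlongrightarrow> L) (at_left 1)"
    using M0 by (auto simp: in_M0_def)
  have summ: "summable (moment \<mu>)"
  proof (rule summable_if_nonneg_powser_tendsto_at_left_1[OF moment_nonneg _ L])
    show "(\<lambda>i. moment \<mu> i * x ^ i) sums \<bar>markov_fun c \<mu> x\<bar>" if "x \<in> {0<..<1}" for x
      using moments_powser_sums[of x] integral_markov_kernel_nonneg[OF that] that c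
      by (simp add: markov_fun_def abs_mult)
  qed
  have "uniform_limit {-1..1} (\<lambda>n x. \<Sum>i<n. lam i * x ^ i) (\<lambda>x. \<Sum>i. lam i * x ^ i) sequentially"
  proof (rule Weierstrass_m_test[OF _ summ])
    show "norm (lam i * x ^ i) \<le> moment \<mu> i" if "x \<in> {-1..1}" for i x
      using that moment_nonneg[of i] c
      by (auto simp: lam abs_mult power_abs intro!: mult_left_le power_le_one)
  qed
  moreover have "(\<Sum>i. lam i * x ^ i) = markov_fun c \<mu> x" if "x \<in> {-1..1}" for x
    using sums_mult[OF moments_powser_sums_closed[OF summ that], of c]
    by (simp add: sums_iff lam markov_fun_def mult.assoc)
  ultimately show ?thesis
    using uniform_limit_cong'[of "{-1..1}"] by (metis (no_types, lifting))
qed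

theorem lemma2p2:
  fixes lam :: "nat \<Rightarrow> real"
  shows "(\<exists>c \<mu>. in_M0 c \<mu> \<and>
            uniform_limit {-1..1} (\<lambda>n x. \<Sum>i<n. lam i * x ^ i) (markov_fun c \<mu>) sequentially)
         \<longleftrightarrow> restricted_hausdorff_solvable lam"
  unfolding restricted_hausdorff_solvable_def moment_def[symmetric]
  using moments_eq_if_uniform_limit_markov uniform_limit_markov_if_moments
  by (metis in_M0_def)

end
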